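(* Let $G$ be a $2$-edge-connected cubic multigraph (loopless) of order $n$ such that there is exactly one pair of vertices $\{u,v\}$ joined by more than one edge, and they are joined by exactly two edges, and such that $G$ is claw-free and diamond-free. Then $\gamma_P(G) \le (n-2)/6$.
   Context: A multigraph is claw-free (resp. diamond-free) if its underlying simple graph has no induced subgraph isomorphic to $K_{1,3}$ (resp. to the diamond $K_4-e$). A multigraph is cubic if every vertex is incident with exactly three edges (counting multiplicity). For $S \subseteq V(G)$: initially all vertices of $S$ and their neighbors are observed; then, repeatedly, any vertex that is the only unobserved neighbor of some observed vertex becomes observed. $S$ is a power dominating set if eventually all vertices are observed; $\gamma_P(G)$ is the minimum size of a power dominating set. *)

theory Defs
  imports Complex_Main
begin

text \<open>A finite loopless multigraph is given by a finite vertex set V and a symmetric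
edge-multiplicity function m (m x y = number of edges joining x and y).\<close>

definition multigraph :: "'a set \<Rightarrow> ('a \<Rightarrow> 'a \<Rightarrow> nat) \<Rightarrow> bool" where
  "multigraph V m \<longleftrightarrow> finite V \<and> (\<forall>x y. m x y = m y x) \<and> (\<forall>x. m x x = 0)
     \<and> (\<forall>x y. m x y > 0 \<longrightarrow> x \<in> V \<and> y \<in> V)"

definition adj :: "('a \<Rightarrow> 'a \<Rightarrow> nat) \<Rightarrow> 'a \<Rightarrow> 'a \<Rightarrow> bool" where
  "adj m x y \<longleftrightarrow> 0 < m x y"

definition cubic :: "'a set \<Rightarrow> ('a \<Rightarrow> 'a \<Rightarrow> nat) \<Rightarrow> bool" where
  "cubic V m \<longleftrightarrow> (\<forall>v\<in>V. (\<Sum>w\<in>V. m v w) = 3)"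

definition connected_mg :: "'a set \<Rightarrow> ('a \<Rightarrow> 'a \<Rightarrow> nat) \<Rightarrow> bool" where
  "connected_mg V m \<longleftrightarrow> V \<noteq> {} \<and> (\<forall>x\<in>V. \<forall>y\<in>V. (adj m)\<^sup>*\<^sup>* x y)"

definition del_edge :: "('a \<Rightarrow> 'a \<Rightarrow> nat) \<Rightarrow> 'a \<Rightarrow> 'a \<Rightarrow> 'a \<Rightarrow> 'a \<Rightarrow> nat" where
  "del_edge m x y = (\<lambda>a b. if {a, b} = {x, y} then m a b - 1 else m a b)"

definition two_edge_connected :: "'a set \<Rightarrow> ('a \<Rightarrow> 'a \<Rightarrow> nat) \<Rightarrow> bool" where
  "two_edge_connected V m \<longleftrightarrow> connected_mg V m \<and>
     (\<forall>x y. 0 < m x y \<longrightarrow> connected_mg V (del_edge m x y))"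

definition claw_free :: "'a set \<Rightarrow> ('a \<Rightarrow> 'a \<Rightarrow> nat) \<Rightarrow> bool" where
  "claw_free V m \<longleftrightarrow> \<not> (\<exists>c\<in>V. \<exists>a\<in>V. \<exists>b\<in>V. \<exists>d\<in>V.
      adj m c a \<and> adj m c b \<and> adj m c d \<and> a \<noteq> b \<and> a \<noteq> d \<and> b \<noteq> d
      \<and> \<not> adj m a b \<and> \<not> adj m a d \<and> \<not> adj m b d)"

definition diamond_free :: "'a set \<Rightarrow> ('a \<Rightarrow> 'a \<Rightarrow> nat) \<Rightarrow> bool" where
  "diamond_free V m \<longleftrightarrow> \<not> (\<exists>a\<in>V. \<exists>b\<in>V. \<exists>c\<in>V. \<exists>d\<in>V.
      distinct [a, b, c, d] \<and> \<not> adj m a b \<and> adj m a c \<and> adj m a d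
      \<and> adj m b c \<and> adj m b d \<and> adj m c d)"

inductive_set observed :: "'a set \<Rightarrow> ('a \<Rightarrow> 'a \<Rightarrow> nat) \<Rightarrow> 'a set \<Rightarrow> 'a set"
  for V m S where
  dom_self: "v \<in> S \<Longrightarrow> v \<in> observed V m S"
| dom_nbr: "u \<in> S \<Longrightarrow> adj m u v \<Longrightarrow> v \<in> observed V m S"
| propagate: "w \<in> observed V m S \<Longrightarrow> adj m w v \<Longrightarrow>
         (\<forall>x\<in>V. adj m w x \<and> x \<noteq> v \<longrightarrow> x \<in> observed V m S) \<Longrightarrow> v \<in> observed V m S"

definition power_dominating :: "'a set \<Rightarrow> ('a \<Rightarrow> 'a \<Rightarrow> nat) \<Rightarrow> 'a set \<Rightarrow> bool" where
  "power_dominating V m S \<longleftrightarrow> S \<subseteq> V \<and> V \<subseteq> observed V m S"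

definition power_domination_number :: "'a set \<Rightarrow> ('a \<Rightarrow> 'a \<Rightarrow> nat) \<Rightarrow> nat" where
  "power_domination_number V m = Min {card S | S. power_dominating V m S}"

end

theory Submission
  imports Defs
begin

(*
  Every vertex other than the ends u, v of the double edge has three distinct neighbours.
  Claw-freeness, diamond-freeness and the absence of a K4 component force exactly two of them
  to be adjacent, so these n - 2 vertices are partitioned into triangles, and each vertex has
  exactly one neighbour outside its triangle. Matching every vertex with that neighbour, except
  that the outer neighbours u', v' of u and v are matched with each other, is a perfect matching
  whose edges join distinct triangles (2-edge-connectivity makes u' and v' distinct and puts
  them in different triangles); contracting the triangles yields a cubic multigraph H on (n - 2)/3
  vertices. In a maximum cut of H every triangle has at least two of its three matching edges
  in the cut, since otherwise moving it to the other side enlarges the cut. One vertex from each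
  triangle of the smaller side, at most (n - 2)/6 vertices, observes its own triangle; every
  other triangle gets two vertices observed across the cut, which then observe the third; and
  finally u and v are observed from u' and v'.
*)

lemma multigraph_adj_sym: "multigraph V m \<Longrightarrow> adj m x y = adj m y x"
  unfolding multigraph_def adj_def by metis

lemma multigraph_not_adj_self: "multigraph V m \<Longrightarrow> \<not> adj m x x"
  unfolding multigraph_def adj_def by simp

lemma multigraph_adj_in_V: "multigraph V m \<Longrightarrow> adj m x y \<Longrightarrow> x \<in> V \<and> y \<in> V"
  unfolding multigraph_def adj_def by blast

definition nbrs :: "('a \<Rightarrow> 'a \<Rightarrow> nat) \<Rightarrow> 'a \<Rightarrow> 'a set" where
  "nbrs m x = {y. adj m x y}"

lemma sum_mult_eq_card_nbrs:
  assumes "finite A" and "\<And>w. w \<in> A \<Longrightarrow> m x w \<le> 1"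
  shows "(\<Sum>w\<in>A. m x w) = card (A \<inter> nbrs m x)"
proof -
  have "(\<Sum>w\<in>A. m x w) = (\<Sum>w\<in>A. if adj m x w then 1 else 0)"
  proof (rule sum.cong)
    fix w assume "w \<in> A"
    then show "m x w = (if adj m x w then 1 else 0)" using assms(2) unfolding adj_def by fastforce
  qed simp
  also have "\<dots> = card (A \<inter> nbrs m x)"
    using assms(1) by (simp add: sum.If_cases nbrs_def Int_def)
  finally show ?thesis .
qed

lemma card_3_obtain_third:
  assumes "card A = 3" "a \<in> A" "b \<in> A" "a \<noteq> b"
  obtains c where "A = {a, b, c}" "c \<noteq> a" "c \<noteq> b"
proof -
  have "card (A - {a, b}) = 1" using assms by (simp add: card_Diff_subset)
  then obtain c where "A - {a, b} = {c}" by (auto simp: card_1_singleton_iff)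
  then show ?thesis using that assms by blast
qed

lemma connected_mg_closed_subset:
  assumes "connected_mg V m" "x \<in> V" "x \<in> C"
    and closed: "\<And>a b. a \<in> C \<Longrightarrow> adj m a b \<Longrightarrow> b \<in> C"
  shows "V \<subseteq> C"
proof
  fix y assume "y \<in> V"
  with assms(1,2) have "(adj m)\<^sup>*\<^sup>* x y" unfolding connected_mg_def by blast
  then show "y \<in> C"
  proof induction
    case (step y z)
    then show ?case using closed by blast
  qed (fact \<open>x \<in> C\<close>)
qed

lemma two_edge_connected_no_bridge_cut:
  assumes tec: "two_edge_connected V m" and "x \<in> V" "x \<in> C" "y \<in> V" "y \<notin> C" "m x y = 1"
    and cut: "\<And>a b. a \<in> C \<Longrightarrow> b \<notin> C \<Longrightarrow> adj m a b \<Longrightarrow> a = x \<and> b = y"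
  shows False
proof -
  let ?m = "del_edge m x y"
  have "connected_mg V ?m" using tec \<open>m x y = 1\<close> unfolding two_edge_connected_def by simp
  moreover have "b \<in> C" if "a \<in> C" "adj ?m a b" for a b
  proof (rule ccontr)
    assume "b \<notin> C"
    have "adj m a b" using \<open>adj ?m a b\<close> unfolding adj_def del_edge_def by (auto split: if_splits)
    then have "a = x \<and> b = y" using cut \<open>a \<in> C\<close> \<open>b \<notin> C\<close> by blast
    then show False using \<open>adj ?m a b\<close> \<open>m x y = 1\<close> unfolding adj_def del_edge_def by simp
  qed
  ultimately have "V \<subseteq> C" using connected_mg_closed_subset[of V ?m x C] \<open>x \<in> V\<close> \<open>x \<in> C\<close> by blast
  then show False using \<open>y \<in> V\<close> \<open>y \<notin> C\<close> by blast
qed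

lemma claw_diamond_free_nbrs_one_edge:
  assumes mg: "multigraph V m" and cf: "claw_free V m" and df: "diamond_free V m"
    and x: "x \<in> V" and N: "nbrs m x = {p, q, r}" "distinct [p, q, r]"
    and not_K4: "\<not> (adj m p q \<and> adj m p r \<and> adj m q r)"
  shows "\<exists>a b c. nbrs m x = {a, b, c} \<and> distinct [a, b, c]
           \<and> adj m a b \<and> \<not> adj m a c \<and> \<not> adj m b c"
proof -
  note sym = multigraph_adj_sym[OF mg]
  have adj_x: "adj m x y" "y \<in> V" "x \<noteq> y" if "y \<in> {p, q, r}" for y
    using that N(1) multigraph_adj_in_V[OF mg] multigraph_not_adj_self[OF mg]
    unfolding nbrs_def by blast+
  have "\<not> (adj m x p \<and> adj m x q \<and> adj m x r \<and> p \<noteq> q \<and> p \<noteq> r \<and> q \<noteq> r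
      \<and> \<not> adj m p q \<and> \<not> adj m p r \<and> \<not> adj m q r)"
    using cf x adj_x(2) unfolding claw_free_def by blast
  then have some_edge: "adj m p q \<or> adj m p r \<or> adj m q r"
    using adj_x(1) N(2) by auto
  have closed: "adj m b c"
    if abc: "{a, b, c} = {p, q, r}" "distinct [a, b, c]" "adj m a b" "adj m a c" for a b c
  proof (rule ccontr)
    assume "\<not> adj m b c"
    have "a \<in> V" "b \<in> V" "c \<in> V" "adj m x a" "adj m x b" "adj m x c"
      "distinct [b, c, x, a]" using abc adj_x by auto
    moreover from this have "\<not> (distinct [b, c, x, a] \<and> \<not> adj m b c \<and> adj m b x \<and> adj m b a
        \<and> adj m c x \<and> adj m c a \<and> adj m x a)"
      using df x unfolding diamond_free_def by blast
    ultimately show False using \<open>\<not> adj m b c\<close> abc(3,4) sym by metis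
  qed
  show ?thesis
  proof (cases "adj m p q")
    case True
    then have "\<not> adj m p r" "\<not> adj m q r"
      using closed[of p q r] closed[of q p r] not_K4 N(2) sym by (auto simp: insert_commute)
    then show ?thesis using True N by blast
  next
    case pq: False
    show ?thesis
    proof (cases "adj m p r")
      case True
      then have "\<not> adj m q r"
        using closed[of r p q] pq N(2) sym by (auto simp: insert_commute)
      moreover have "nbrs m x = {p, r, q}" "distinct [p, r, q]" using N by auto
      ultimately show ?thesis using True pq sym by blast
    next
      case False
      moreover have "nbrs m x = {q, r, p}" "distinct [q, r, p]" using N by auto
      ultimately show ?thesis using pq some_edge sym by blast
    qed
  qed
qed

lemma observed_last_nbr:
  assumes "w \<in> observed V m S" "v \<in> nbrs m w" "nbrs m w - {v} \<subseteq> observed V m S"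
  shows "v \<in> observed V m S"
proof (rule observed.propagate[of w])
  show "\<forall>x\<in>V. adj m w x \<and> x \<noteq> v \<longrightarrow> x \<in> observed V m S"
    using assms(3) unfolding nbrs_def by blast
qed (use assms in \<open>auto simp: nbrs_def\<close>)

lemma power_domination_number_le:
  assumes "finite V" "power_dominating V m S"
  shows "power_domination_number V m \<le> card S"
proof -
  have "{card S | S. power_dominating V m S} \<subseteq> card ` Pow V"
    unfolding power_dominating_def by blast
  then have "finite {card S | S. power_dominating V m S}"
    using assms(1) finite_subset by blast
  then show ?thesis
    unfolding power_domination_number_def using assms(2) by (intro Min_le) blast+
qed

(* The blocks are the vertices of a multigraph whose edges are the pairs {x, f x};
   crossing A consists of the ends of the edges leaving the block set A. *)
locale block_involution =
  fixes X :: "'a set" and blk :: "'a \<Rightarrow> 'b" and f :: "'a \<Rightarrow> 'a" and k :: nat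
  assumes finite_X: "finite X"
    and f_in: "x \<in> X \<Longrightarrow> f x \<in> X"
    and f_f: "x \<in> X \<Longrightarrow> f (f x) = x"
    and blk_f: "x \<in> X \<Longrightarrow> blk (f x) \<noteq> blk x"
    and card_block: "x \<in> X \<Longrightarrow> card {y \<in> X. blk y = blk x} = k"
begin

definition block :: "'b \<Rightarrow> 'a set" where
  "block b = {y \<in> X. blk y = b}"

definition crossing :: "'b set \<Rightarrow> 'a set" where
  "crossing A = {x \<in> X. (blk x \<in> A) \<noteq> (blk (f x) \<in> A)}"

lemma inj_on_f: "inj_on f X"
  by (rule inj_on_inverseI[of _ f]) (simp add: f_f)

lemma crossing_subset: "crossing A \<subseteq> X"
  unfolding crossing_def by blast

lemma f_mem_crossing: "x \<in> X \<Longrightarrow> f x \<in> crossing A \<longleftrightarrow> x \<in> crossing A"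
  unfolding crossing_def using f_in f_f by auto

lemma crossing_complement: "crossing (blk ` X - A) = crossing A"
  unfolding crossing_def using f_in by auto

lemma card_crossing_flip:
  assumes b: "b \<in> blk ` X"
  shows "card (crossing (sym_diff A {b})) + 4 * card (crossing A \<inter> block b)
           = card (crossing A) + 2 * k"
proof -
  define C where "C = crossing A"
  define Y where "Y = block b \<union> f ` block b"
  have bX: "block b \<subseteq> X" and Y_X: "Y \<subseteq> X"
    unfolding Y_def block_def using f_in by auto
  have finite: "finite (block b)" "finite Y" "finite C"
    using finite_subset[OF bX finite_X] finite_subset[OF Y_X finite_X]
      finite_subset[OF crossing_subset finite_X] unfolding C_def .
  have disjoint: "block b \<inter> f ` block b = {}"
    unfolding block_def using blk_f by fastforce
  have card_image_f: "card (f ` Z) = card Z" if "Z \<subseteq> block b" for Z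
  proof (rule card_image)
    show "inj_on f Z" using inj_on_subset[OF inj_on_f] that bX by blast
  qed
  have card_Y: "card Y = 2 * k"
  proof -
    have "card (block b) = k" using b card_block unfolding block_def by auto
    then show ?thesis
      unfolding Y_def using card_Un_disjoint[OF finite(1) _ disjoint] card_image_f finite(1)
      by simp
  qed
  have "x \<in> f ` block b \<longleftrightarrow> blk (f x) = b" if "x \<in> X" for x
    using that f_in f_f unfolding block_def by (auto intro: image_eqI[of x f "f x"])
  then have "crossing (sym_diff A {b}) = (C - Y) \<union> (Y - C)"
    unfolding C_def crossing_def Y_def block_def using f_in f_f blk_f by auto
  then have "card (crossing (sym_diff A {b})) = card ((C - Y) \<union> (Y - C))" by simp
  also have "\<dots> = card (C - Y) + card (Y - C)"
    using finite by (intro card_Un_disjoint) auto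
  also have "\<dots> = card C - card (C \<inter> Y) + (card Y - card (C \<inter> Y))"
    using finite by (simp add: card_Diff_subset_Int Int_commute)
  finally have card_flip: "card (crossing (sym_diff A {b}))
      = card C - card (C \<inter> Y) + (card Y - card (C \<inter> Y))" .
  have "C \<inter> Y = (C \<inter> block b) \<union> f ` (C \<inter> block b)"
    unfolding C_def Y_def using f_mem_crossing bX f_f f_in by (auto intro: image_eqI)
  moreover have "card ((C \<inter> block b) \<union> f ` (C \<inter> block b))
      = card (C \<inter> block b) + card (f ` (C \<inter> block b))"
    using disjoint finite(1) by (intro card_Un_disjoint) auto
  ultimately have "card (C \<inter> Y) = 2 * card (C \<inter> block b)"
    using card_image_f[of "C \<inter> block b"] by simp
  moreover have "card (C \<inter> Y) \<le> card C" "card (C \<inter> Y) \<le> card Y"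
    using finite by (simp_all add: card_mono)
  ultimately show ?thesis using card_Y card_flip unfolding C_def by linarith
qed

lemma exists_small_side_of_locally_max_cut:
  "\<exists>B \<subseteq> blk ` X. 2 * card B \<le> card (blk ` X)
     \<and> (\<forall>x\<in>X. k \<le> 2 * card (crossing B \<inter> block (blk x)))"
proof -
  let ?cut = "\<lambda>A. card (crossing A)"
  have finite: "finite (?cut ` Pow (blk ` X))" using finite_X by simp
  have "Max (?cut ` Pow (blk ` X)) \<in> ?cut ` Pow (blk ` X)"
    using finite by (rule Max_in) blast
  then obtain A where A_max: "Max (?cut ` Pow (blk ` X)) = ?cut A" and "A \<in> Pow (blk ` X)"
    by (rule imageE)
  then have A: "A \<subseteq> blk ` X" by blast
  have max: "?cut A' \<le> ?cut A" if "A' \<subseteq> blk ` X" for A'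
    unfolding A_max[symmetric] using finite that by (simp add: Max_ge)
  have locally_max: "k \<le> 2 * card (crossing A \<inter> block (blk x))" if "x \<in> X" for x
  proof -
    have "sym_diff A {blk x} \<subseteq> blk ` X" using A that by auto
    then have "?cut (sym_diff A {blk x}) \<le> ?cut A" by (rule max)
    moreover have "blk x \<in> blk ` X" using that by simp
    ultimately show ?thesis using card_crossing_flip[of "blk x" A] by linarith
  qed
  have "finite (blk ` X)" using finite_X by simp
  then have "card A + card (blk ` X - A) = card (blk ` X)"
    using A by (simp add: card_Diff_subset card_mono finite_subset)
  then consider "2 * card A \<le> card (blk ` X)" | "2 * card (blk ` X - A) \<le> card (blk ` X)"
    by linarith
  then show ?thesis
  proof cases
    case 1
    then show ?thesis using A locally_max by (intro exI[of _ A]) simp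
  next
    case 2
    then show ?thesis using locally_max
      by (intro exI[of _ "blk ` X - A"]) (simp add: crossing_complement)
  qed
qed

end

locale claw_diamond_free_digon_cubic =
  fixes V :: "'a set" and m :: "'a \<Rightarrow> 'a \<Rightarrow> nat" and u v :: 'a
  assumes multigraph: "multigraph V m" and two_edge_connected: "two_edge_connected V m"
    and cubic: "cubic V m" and u_neq_v: "u \<noteq> v" and digon: "m u v = 2"
    and only_digon: "\<And>x y. 1 < m x y \<Longrightarrow> {x, y} = {u, v}"
    and claw_free: "claw_free V m" and diamond_free: "diamond_free V m"
begin

abbreviation N :: "'a \<Rightarrow> 'a set" where
  "N \<equiv> nbrs m"

abbreviation W :: "'a set" where
  "W \<equiv> V - {u, v}"

lemma adj_sym: "adj m x y = adj m y x"
  using multigraph_adj_sym[OF multigraph] .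

lemma not_adj_self: "\<not> adj m x x"
  using multigraph_not_adj_self[OF multigraph] .

lemma adj_in_V: "adj m x y \<Longrightarrow> x \<in> V \<and> y \<in> V"
  using multigraph_adj_in_V[OF multigraph] .

lemma u_in_V: "u \<in> V" and v_in_V: "v \<in> V"
  using adj_in_V[of u v] digon unfolding adj_def by simp_all

lemma mem_nbrs: "y \<in> N x \<longleftrightarrow> adj m x y"
  unfolding nbrs_def by simp

lemma finite_V: "finite V"
  using multigraph unfolding multigraph_def by blast

lemma nbrs_subset_V: "N x \<subseteq> V"
  using adj_in_V mem_nbrs by blast

lemma finite_nbrs: "finite (N x)"
  using finite_subset[OF nbrs_subset_V finite_V] .

lemma mult_le_1: "{x, y} \<noteq> {u, v} \<Longrightarrow> m x y \<le> 1"
  using only_digon[of x y] by linarith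

lemma mult_eq_1: "x \<in> W \<Longrightarrow> adj m x y \<Longrightarrow> m x y = 1"
  using mult_le_1[of x y] unfolding adj_def by (auto simp: doubleton_eq_iff)

lemma degree_eq_3: "x \<in> V \<Longrightarrow> (\<Sum>w\<in>V. m x w) = 3"
  using cubic unfolding cubic_def by blast

lemma card_nbrs: assumes "x \<in> W" shows "card (N x) = 3"
proof -
  have "(\<Sum>w\<in>V. m x w) = card (V \<inter> N x)"
    using finite_V assms by (intro sum_mult_eq_card_nbrs mult_le_1) auto
  then show ?thesis using degree_eq_3 assms nbrs_subset_V by (simp add: Int_absorb1)
qed

definition opp :: "'a \<Rightarrow> 'a" where
  "opp a = (if a = u then v else u)"

lemma opp_digon: "a \<in> {u, v} \<Longrightarrow> opp a \<in> {u, v} \<and> {a, opp a} = {u, v} \<and> opp (opp a) = a"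
  unfolding opp_def using u_neq_v by auto

lemma nbrs_digon_end_ex: assumes a: "a \<in> {u, v}" shows "\<exists>y. N a = {opp a, y} \<and> y \<noteq> opp a"
proof -
  define b where "b = opp a"
  have ab: "{a, b} = {u, v}" "a \<noteq> b" "a \<in> V" "b \<in> V" "m a b = 2"
    using opp_digon[OF a] u_in_V v_in_V digon multigraph
    unfolding b_def multigraph_def by (auto simp: doubleton_eq_iff)
  have "(\<Sum>w\<in>V. m a w) = m a b + (\<Sum>w\<in>V - {b}. m a w)"
    using sum.remove[OF finite_V \<open>b \<in> V\<close>] by simp
  then have "(\<Sum>w\<in>V - {b}. m a w) = 1" using degree_eq_3 ab by simp
  moreover have "(\<Sum>w\<in>V - {b}. m a w) = card ((V - {b}) \<inter> N a)"
    using finite_V ab by (intro sum_mult_eq_card_nbrs mult_le_1) (auto simp: doubleton_eq_iff)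
  ultimately obtain y where y: "(V - {b}) \<inter> N a = {y}"
    by (auto simp: card_1_singleton_iff)
  have "b \<in> N a" using ab mem_nbrs unfolding adj_def by simp
  then have "N a = insert b ((V - {b}) \<inter> N a)" using nbrs_subset_V by blast
  then show ?thesis using y unfolding b_def by auto
qed

definition outer :: "'a \<Rightarrow> 'a" where
  "outer a = (SOME y. N a = {opp a, y} \<and> y \<noteq> opp a)"

lemma nbrs_digon_end: assumes "a \<in> {u, v}" shows "N a = {opp a, outer a}" "outer a \<in> W"
proof -
  have N: "N a = {opp a, outer a} \<and> outer a \<noteq> opp a"
    unfolding outer_def using nbrs_digon_end_ex[OF assms] by (rule someI_ex)
  then show "N a = {opp a, outer a}" by simp
  have "adj m a (outer a)" using N mem_nbrs by blast
  then show "outer a \<in> W"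
    using N opp_digon[OF assms] not_adj_self adj_in_V by (auto simp: doubleton_eq_iff)
qed

lemma nbrs_u: "N u = {v, outer u}" and nbrs_v: "N v = {u, outer v}"
  using nbrs_digon_end(1)[of u] nbrs_digon_end(1)[of v] u_neq_v unfolding opp_def by auto

lemma card_nbrs_digon_end: "a \<in> {u, v} \<Longrightarrow> card (N a) \<le> 2"
  using nbrs_digon_end(1) by (simp add: card_insert_if)

lemma outer_u_neq_outer_v: "outer u \<noteq> outer v"
proof
  assume eq: "outer u = outer v"
  define x where "x = outer u"
  have x: "x \<in> W" "u \<in> N x" "v \<in> N x"
    using nbrs_digon_end(2)[of u] nbrs_u nbrs_v eq mem_nbrs adj_sym unfolding x_def by auto
  obtain c where c: "N x = {u, v, c}" "c \<noteq> u" "c \<noteq> v"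
    using card_3_obtain_third[OF card_nbrs[OF x(1)] x(2,3) u_neq_v] by blast
  have adj_c: "adj m x c" using c(1) mem_nbrs by blast
  show False
  proof (rule two_edge_connected_no_bridge_cut[OF two_edge_connected, of x "{u, v, x}" c])
    show "c \<notin> {u, v, x}" using c adj_c not_adj_self by auto
    show "m x c = 1" using mult_eq_1[OF x(1) adj_c] .
    fix a b assume "a \<in> {u, v, x}" "b \<notin> {u, v, x}" "adj m a b"
    then show "a = x \<and> b = c"
      using nbrs_u nbrs_v c(1) eq mem_nbrs unfolding x_def by auto
  qed (use x adj_c adj_in_V in auto)
qed

lemma no_K4:
  assumes "distinct [w, x, y, z]" "adj m w x" "adj m w y" "adj m w z"
    "adj m x y" "adj m x z" "adj m y z"
  shows False
proof -
  define C where "C = {w, x, y, z}"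
  have nbrs_C: "N c = C - {c} \<and> c \<noteq> u" if "c \<in> C" for c
  proof -
    have sub: "C - {c} \<subseteq> N c" using assms that adj_sym mem_nbrs unfolding C_def by auto
    have card: "card (C - {c}) = 3" using assms(1) that unfolding C_def by auto
    then have "c \<notin> {u, v}"
      using card_mono[OF finite_nbrs sub] card_nbrs_digon_end[of c] by auto
    moreover have "c \<in> V" using that assms adj_in_V unfolding C_def by blast
    ultimately have "card (N c) = 3" using card_nbrs by blast
    then show ?thesis
      using card_subset_eq[OF finite_nbrs sub] card \<open>c \<notin> {u, v}\<close> by simp
  qed
  have "connected_mg V m" using two_edge_connected unfolding two_edge_connected_def by blast
  moreover have "w \<in> V" using assms(2) adj_in_V by blast
  moreover have "b \<in> C" if "a \<in> C" "adj m a b" for a b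
    using that nbrs_C mem_nbrs by blast
  ultimately have "V \<subseteq> C" using connected_mg_closed_subset[of V m w C] unfolding C_def by blast
  then show False using u_in_V nbrs_C by blast
qed

lemma nbrs_one_edge:
  assumes "x \<in> W"
  obtains a b c where "N x = {a, b, c}" "distinct [a, b, c]"
    "adj m a b" "\<not> adj m a c" "\<not> adj m b c"
proof -
  obtain p q r where pqr: "N x = {p, q, r}" "distinct [p, q, r]"
    using card_nbrs[OF assms] by (auto simp: card_3_iff)
  have "x \<notin> {p, q, r}" using pqr(1) not_adj_self mem_nbrs by blast
  moreover have "adj m x p" "adj m x q" "adj m x r" using pqr(1) mem_nbrs by blast+
  ultimately have "\<not> (adj m p q \<and> adj m p r \<and> adj m q r)"
    using no_K4[of x p q r] pqr(2) by auto
  then show ?thesis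
    using claw_diamond_free_nbrs_one_edge[OF multigraph claw_free diamond_free _ pqr] assms that
    by blast
qed

definition ext_nbr :: "'a \<Rightarrow> 'a" where
  "ext_nbr x = (THE c. c \<in> N x \<and> (\<forall>y\<in>N x. \<not> adj m c y))"

definition tri :: "'a \<Rightarrow> 'a set" where
  "tri x = insert x (N x - {ext_nbr x})"

lemma tri_structure:
  assumes "x \<in> W"
  obtains a b where "distinct [x, a, b, ext_nbr x]" "N x = {a, b, ext_nbr x}" "tri x = {x, a, b}"
    "adj m a b" "\<not> adj m a (ext_nbr x)" "\<not> adj m b (ext_nbr x)"
proof -
  obtain a b c where abc: "N x = {a, b, c}" "distinct [a, b, c]"
    "adj m a b" "\<not> adj m a c" "\<not> adj m b c"
    using nbrs_one_edge[OF assms] .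
  have "ext_nbr x = c"
    unfolding ext_nbr_def
  proof (rule the_equality)
    show "c \<in> N x \<and> (\<forall>y\<in>N x. \<not> adj m c y)"
      using abc not_adj_self adj_sym by auto
    show "d = c" if "d \<in> N x \<and> (\<forall>y\<in>N x. \<not> adj m d y)" for d
      using that abc adj_sym by auto
  qed
  moreover have "x \<notin> {a, b, c}" using abc(1) not_adj_self mem_nbrs by blast
  ultimately show ?thesis using that abc unfolding tri_def by auto
qed

lemma adj_ext_nbr: "x \<in> W \<Longrightarrow> adj m x (ext_nbr x)"
  by (metis tri_structure insertCI mem_nbrs)

lemma nbrs_eq: "x \<in> W \<Longrightarrow> N x = insert (ext_nbr x) (tri x - {x})"
  by (rule tri_structure) auto

lemma ext_nbr_not_in_tri: "x \<in> W \<Longrightarrow> ext_nbr x \<notin> tri x"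
  by (rule tri_structure) auto

lemma card_tri: "x \<in> W \<Longrightarrow> card (tri x) = 3"
  by (rule tri_structure) auto

lemma self_in_tri: "x \<in> tri x"
  unfolding tri_def by simp

lemma adj_cases: "x \<in> W \<Longrightarrow> adj m x y \<Longrightarrow> y \<in> tri x \<or> y = ext_nbr x"
  using nbrs_eq mem_nbrs by blast

lemma adj_tri: "x \<in> W \<Longrightarrow> y \<in> tri x \<Longrightarrow> y \<noteq> x \<Longrightarrow> adj m x y"
  using nbrs_eq mem_nbrs by blast

lemma triangle_avoids_digon:
  assumes x: "x \<in> W" and adj: "adj m x a" "adj m x b" "adj m a b"
  shows "a \<in> W"
proof -
  have "a \<noteq> d" if d: "d \<in> {u, v}" for d
  proof
    assume "a = d"
    then have "x \<in> N d" "b \<in> N d" using adj adj_sym mem_nbrs by auto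
    moreover have "x \<noteq> b" using adj(2) not_adj_self by blast
    ultimately have "x = outer d" "b = opp d"
      using nbrs_digon_end(1)[OF d] x by (auto simp: opp_def split: if_splits)
    then have "x \<in> N (opp d)" using adj(2) adj_sym mem_nbrs by simp
    then have "x = outer (opp d)"
      using nbrs_digon_end(1)[of "opp d"] opp_digon[OF d] x by auto
    then show False
      using \<open>x = outer d\<close> d outer_u_neq_outer_v opp_digon[OF d] by (auto simp: opp_def)
  qed
  then show ?thesis using adj adj_in_V by blast
qed

lemma tri_subset_W: assumes "x \<in> W" shows "tri x \<subseteq> W"
proof (rule tri_structure[OF assms])
  fix a b assume ab: "tri x = {x, a, b}" "adj m a b" "N x = {a, b, ext_nbr x}"
  have "adj m x a" "adj m x b" using ab(3) mem_nbrs by blast+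
  then have "a \<in> W" "b \<in> W"
    using triangle_avoids_digon[OF assms] ab(2) adj_sym by blast+
  then show "tri x \<subseteq> W" using ab(1) assms by auto
qed

lemma tri_eq_of_triangle:
  assumes x: "x \<in> W" and adj: "adj m x p" "adj m x q" "adj m p q" and "p \<noteq> q"
  shows "tri x = {x, p, q}"
proof (rule tri_structure[OF x])
  fix a b assume ab: "distinct [x, a, b, ext_nbr x]" "N x = {a, b, ext_nbr x}" "tri x = {x, a, b}"
    "\<not> adj m a (ext_nbr x)" "\<not> adj m b (ext_nbr x)"
  have "p \<in> {a, b, ext_nbr x}" "q \<in> {a, b, ext_nbr x}" using adj ab(2) mem_nbrs by blast+
  moreover have "p \<noteq> ext_nbr x" "q \<noteq> ext_nbr x"
    using calculation adj(3) ab(4,5) adj_sym \<open>p \<noteq> q\<close> by auto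
  ultimately have "{p, q} = {a, b}" using \<open>p \<noteq> q\<close> by auto
  then show ?thesis using ab(3) by auto
qed

lemma tri_eq: assumes x: "x \<in> W" and y: "y \<in> tri x" shows "tri y = tri x"
proof (rule tri_structure[OF x])
  fix a b assume ab: "distinct [x, a, b, ext_nbr x]" "N x = {a, b, ext_nbr x}" "tri x = {x, a, b}"
    "adj m a b"
  have "adj m x a" "adj m x b" using ab(2) mem_nbrs by blast+
  moreover have "a \<in> W" "b \<in> W" using tri_subset_W[OF x] ab(3) by auto
  ultimately have "tri a = {a, x, b}" "tri b = {b, x, a}"
    using tri_eq_of_triangle ab(1,4) adj_sym by auto
  then show ?thesis using y ab(3) by auto
qed

lemma tri_eq_iff: "x \<in> W \<Longrightarrow> y \<in> W \<Longrightarrow> tri x = tri y \<longleftrightarrow> x \<in> tri y"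
  using tri_eq self_in_tri by metis

lemma ext_nbr_outer: assumes "a \<in> {u, v}" shows "ext_nbr (outer a) = a"
proof -
  have "outer a \<in> W" "adj m (outer a) a"
    using nbrs_digon_end[OF assms] adj_sym mem_nbrs by auto
  moreover have "a \<notin> tri (outer a)" using tri_subset_W assms calculation(1) by blast
  ultimately show ?thesis using adj_cases[of "outer a" a] by auto
qed

lemma outer_ext_nbr: assumes "x \<in> W" "ext_nbr x \<in> {u, v}" shows "x = outer (ext_nbr x)"
proof -
  have "x \<in> N (ext_nbr x)" using adj_ext_nbr[OF assms(1)] adj_sym mem_nbrs by blast
  then show ?thesis using nbrs_digon_end(1)[OF assms(2)] opp_digon[OF assms(2)] assms(1) by auto
qed

lemma ext_nbr_ext_nbr: assumes x: "x \<in> W" and "ext_nbr x \<notin> {u, v}" shows "ext_nbr x \<in> W" "ext_nbr (ext_nbr x) = x"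
proof -
  have "ext_nbr x \<in> V" using adj_ext_nbr[OF x] adj_in_V by blast
  then show c: "ext_nbr x \<in> W" using assms(2) by blast
  have "x \<notin> tri (ext_nbr x)"
  proof
    assume "x \<in> tri (ext_nbr x)"
    then have "tri x = tri (ext_nbr x)" using tri_eq[OF c] by blast
    then show False using ext_nbr_not_in_tri[OF x] self_in_tri by metis
  qed
  moreover have "adj m (ext_nbr x) x" using adj_ext_nbr[OF x] adj_sym by blast
  ultimately show "ext_nbr (ext_nbr x) = x" using adj_cases[OF c, of x] by auto
qed

lemma tri_outer_u_neq_tri_outer_v: "tri (outer u) \<noteq> tri (outer v)"
proof
  assume eq: "tri (outer u) = tri (outer v)"
  define T where "T = tri (outer u)"
  have outer: "outer u \<in> W" "outer v \<in> W" using nbrs_digon_end(2) by auto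
  have "outer u \<in> T" "outer v \<in> T" unfolding T_def using eq self_in_tri by metis+
  moreover have "card T = 3" unfolding T_def using card_tri[OF outer(1)] .
  ultimately obtain w where T: "T = {outer u, outer v, w}" "w \<noteq> outer u" "w \<noteq> outer v"
    using card_3_obtain_third outer_u_neq_outer_v by metis
  have T_W: "T \<subseteq> W" unfolding T_def using tri_subset_W[OF outer(1)] .
  have tri_T: "tri a = T" if "a \<in> T" for a
    using tri_eq[OF outer(1)] that unfolding T_def by blast
  have w: "w \<in> W" "tri w = T" using T T_W tri_T by auto
  have ext_T: "ext_nbr a \<in> {u, v}" if "a \<in> T" "a \<noteq> w" for a
    using that T ext_nbr_outer[of u] ext_nbr_outer[of v] by auto
  have "ext_nbr w \<notin> {u, v}"
  proof
    assume "ext_nbr w \<in> {u, v}"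
    then have "w = outer (ext_nbr w)" by (rule outer_ext_nbr[OF w(1)])
    then show False using \<open>ext_nbr w \<in> {u, v}\<close> T(2,3) by blast
  qed
  then have ext_w: "ext_nbr w \<notin> {u, v} \<union> T"
    using ext_nbr_not_in_tri[OF w(1)] w(2) by blast
  show False
  proof (rule two_edge_connected_no_bridge_cut[OF two_edge_connected, of w "{u, v} \<union> T"])
    show "m w (ext_nbr w) = 1" using mult_eq_1[OF w(1) adj_ext_nbr[OF w(1)]] .
    fix a b assume a: "a \<in> {u, v} \<union> T" and b: "b \<notin> {u, v} \<union> T" and ab: "adj m a b"
    show "a = w \<and> b = ext_nbr w"
    proof (cases "a \<in> {u, v}")
      case True
      then have "b \<in> {u, v} \<union> T" using ab nbrs_u nbrs_v T mem_nbrs by auto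
      then show ?thesis using b by blast
    next
      case False
      then have "a \<in> T" using a by blast
      then have "b = ext_nbr a" using adj_cases[OF _ ab] T_W tri_T b by blast
      moreover have "a = w" using ext_T[OF \<open>a \<in> T\<close>] b calculation by blast
      ultimately show ?thesis by simp
    qed
  qed (use w ext_w adj_ext_nbr[OF w(1)] adj_in_V self_in_tri in auto)
qed

(* The perfect matching of the graph in which the path outer u, u, v, outer v is replaced by an edge. *)
definition mate :: "'a \<Rightarrow> 'a" where
  "mate x = (if ext_nbr x \<in> {u, v} then outer (opp (ext_nbr x)) else ext_nbr x)"

lemma mate_matching:
  assumes x: "x \<in> W"
  shows "mate x \<in> W" "mate (mate x) = x" "mate x \<notin> tri x"
proof -
  have "mate x \<in> W \<and> mate (mate x) = x \<and> mate x \<notin> tri x"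
  proof (cases "ext_nbr x \<in> {u, v}")
    case True
    define d where "d = ext_nbr x"
    have d: "d \<in> {u, v}" "opp d \<in> {u, v}" "opp (opp d) = d" "x = outer d"
      using True opp_digon[of d] outer_ext_nbr[OF x True] unfolding d_def by blast+
    have "mate x = outer (opp d)" unfolding mate_def d_def using True by simp
    moreover have "mate (outer (opp d)) = outer d"
      unfolding mate_def using ext_nbr_outer d by simp
    moreover have "outer (opp d) \<in> W" using nbrs_digon_end(2) d(2) by blast
    moreover have "tri (outer (opp d)) \<noteq> tri x"
      using d tri_outer_u_neq_tri_outer_v unfolding opp_def by (auto split: if_splits)
    then have "outer (opp d) \<notin> tri x" using tri_eq_iff[OF calculation(3) x] by blast
    ultimately show ?thesis using d(4) by simp
  next
    case False
    then show ?thesis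
      unfolding mate_def using ext_nbr_ext_nbr[OF x] ext_nbr_not_in_tri[OF x] x by auto
  qed
  then show "mate x \<in> W" "mate (mate x) = x" "mate x \<notin> tri x" by auto
qed

lemma finite_W: "finite W"
  using finite_V by simp

sublocale triangles: block_involution W tri mate 3
proof
  show "finite W" by (rule finite_W)
  fix x assume x: "x \<in> W"
  show "mate x \<in> W" "mate (mate x) = x" using mate_matching[OF x] by simp_all
  show "tri (mate x) \<noteq> tri x"
    using mate_matching[OF x] tri_eq_iff[of "mate x" x] self_in_tri x by metis
  have "{y \<in> W. tri y = tri x} = tri x"
    using tri_eq_iff[OF _ x] tri_subset_W[OF x] by blast
  then show "card {y \<in> W. tri y = tri x} = 3" using card_tri[OF x] by simp
qed

lemma triangles_block_tri: assumes x: "x \<in> W" shows "triangles.block (tri x) = tri x"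
  unfolding triangles.block_def using tri_eq_iff[OF _ x] tri_subset_W[OF x] by blast

lemma ext_nbr_observed:
  assumes "x \<in> W" "tri x \<subseteq> observed V m S"
  shows "ext_nbr x \<in> observed V m S"
proof (rule observed_last_nbr[of x])
  show "x \<in> observed V m S" using assms(2) self_in_tri by blast
  show "ext_nbr x \<in> N x" using adj_ext_nbr[OF assms(1)] mem_nbrs by blast
  show "N x - {ext_nbr x} \<subseteq> observed V m S" using nbrs_eq[OF assms(1)] assms(2) by auto
qed

lemma observed_of_mate_tri:
  assumes x: "x \<in> W" and obs: "tri (mate x) \<subseteq> observed V m S"
  shows "x \<in> observed V m S" "ext_nbr x \<in> observed V m S"
proof -
  have "x \<in> observed V m S \<and> ext_nbr x \<in> observed V m S"
  proof (cases "ext_nbr x \<in> {u, v}")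
    case True
    define d where "d = ext_nbr x"
    have d: "d \<in> {u, v}" "opp d \<in> {u, v}" "opp (opp d) = d" "x = outer d"
      using True opp_digon[of d] outer_ext_nbr[OF x True] unfolding d_def by blast+
    have "mate x = outer (opp d)" unfolding mate_def d_def using True by simp
    then have obs': "tri (outer (opp d)) \<subseteq> observed V m S" using obs by simp
    have "ext_nbr (outer (opp d)) \<in> observed V m S"
      using ext_nbr_observed[OF nbrs_digon_end(2)[OF d(2)] obs'] .
    then have opp_d: "opp d \<in> observed V m S" using ext_nbr_outer[OF d(2)] by simp
    have "N (opp d) = {d, outer (opp d)}" using nbrs_digon_end(1)[OF d(2)] d(3) by simp
    moreover have "outer (opp d) \<in> observed V m S" using obs' self_in_tri by blast
    ultimately have d_obs: "d \<in> observed V m S"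
      using observed_last_nbr[OF opp_d, of d] by auto
    have "N d = {opp d, x}" using nbrs_digon_end(1)[OF d(1)] d(4) by simp
    then have "x \<in> observed V m S"
      using observed_last_nbr[OF d_obs, of x] opp_d by auto
    with d_obs show ?thesis unfolding d_def by blast
  next
    case False
    then have "tri (ext_nbr x) \<subseteq> observed V m S" using obs unfolding mate_def by simp
    then have "ext_nbr (ext_nbr x) \<in> observed V m S" "ext_nbr x \<in> observed V m S"
      using ext_nbr_observed ext_nbr_ext_nbr(1)[OF x False] self_in_tri by blast+
    then show ?thesis using ext_nbr_ext_nbr(2)[OF x False] by simp
  qed
  then show "x \<in> observed V m S" "ext_nbr x \<in> observed V m S" by auto
qed

lemma tri_observed_of_two:
  assumes x: "x \<in> W" and x12: "x1 \<in> tri x" "x2 \<in> tri x" "x1 \<noteq> x2"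
    and obs: "x1 \<in> observed V m S" "x2 \<in> observed V m S" "ext_nbr x1 \<in> observed V m S"
  shows "tri x \<subseteq> observed V m S"
proof -
  obtain x3 where x3: "tri x = {x1, x2, x3}" "x3 \<noteq> x1" "x3 \<noteq> x2"
    using card_3_obtain_third[OF card_tri[OF x] x12] .
  have x1: "x1 \<in> W" "tri x1 = tri x" using tri_subset_W[OF x] tri_eq[OF x] x12(1) by blast+
  have "x3 \<in> observed V m S"
  proof (rule observed_last_nbr[of x1])
    show "x3 \<in> N x1" using adj_tri[OF x1(1)] x1(2) x3 mem_nbrs by auto
    show "N x1 - {x3} \<subseteq> observed V m S" using nbrs_eq[OF x1(1)] x1(2) x3 obs by auto
  qed (fact obs(1))
  then show ?thesis using x3(1) obs by simp
qed

definition rep :: "'a set \<Rightarrow> 'a" where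
  "rep T = (SOME x. x \<in> T)"

lemma rep_in_tri: "x \<in> W \<Longrightarrow> rep (tri x) \<in> tri x"
  unfolding rep_def using self_in_tri by (rule someI)

lemma tri_observed_of_chosen:
  assumes "x \<in> W" "tri x \<in> B"
  shows "tri x \<subseteq> observed V m (rep ` B)"
proof
  fix y assume y: "y \<in> tri x"
  define s where "s = rep (tri x)"
  have "s \<in> tri x" unfolding s_def using rep_in_tri[OF assms(1)] .
  then have s: "s \<in> rep ` B" "s \<in> W" "tri s = tri x"
    using assms tri_subset_W tri_eq[OF assms(1)] unfolding s_def by blast+
  show "y \<in> observed V m (rep ` B)"
  proof (cases "y = s")
    case True
    then show ?thesis using s(1) observed.dom_self by simp
  next
    case False
    then have "adj m s y" using adj_tri[OF s(2)] s(3) y by blast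
    with s(1) show ?thesis by (rule observed.dom_nbr)
  qed
qed

lemma all_observed_of_two_crossing:
  assumes B: "B \<subseteq> tri ` W"
    and crossing: "\<And>x. x \<in> W \<Longrightarrow> 2 \<le> card (triangles.crossing B \<inter> tri x)"
  shows "V \<subseteq> observed V m (rep ` B)"
proof -
  let ?O = "observed V m (rep ` B)"
  have tri_obs: "tri x \<subseteq> ?O" if x: "x \<in> W" for x
  proof (cases "tri x \<in> B")
    case True
    then show ?thesis by (rule tri_observed_of_chosen[OF x])
  next
    case False
    have crossing_observed: "y \<in> ?O \<and> ext_nbr y \<in> ?O" if y: "y \<in> triangles.crossing B \<inter> tri x" for y
    proof -
      have "y \<in> W" "tri y = tri x" using y tri_subset_W[OF x] tri_eq[OF x] by blast+
      then have "tri (mate y) \<in> B" using y False unfolding triangles.crossing_def by auto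
      then have "tri (mate y) \<subseteq> ?O"
        using tri_observed_of_chosen mate_matching(1)[OF \<open>y \<in> W\<close>] by blast
      then show ?thesis using observed_of_mate_tri[OF \<open>y \<in> W\<close>] by blast
    qed
    have "finite (triangles.crossing B \<inter> tri x)"
      using finite_subset[OF triangles.crossing_subset finite_W] by blast
    moreover have "\<not> card (triangles.crossing B \<inter> tri x) \<le> Suc 0" using crossing[OF x] by simp
    ultimately obtain x1 x2 where "x1 \<in> triangles.crossing B \<inter> tri x"
      "x2 \<in> triangles.crossing B \<inter> tri x" "x1 \<noteq> x2"
      using card_le_Suc0_iff_eq by blast
    then show ?thesis using tri_observed_of_two[OF x] crossing_observed by blast
  qed
  have "W \<subseteq> ?O" using tri_obs self_in_tri by blast
  moreover have "a \<in> ?O" if a: "a \<in> {u, v}" for a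
  proof -
    have "outer a \<in> W" using nbrs_digon_end(2)[OF a] .
    then have "ext_nbr (outer a) \<in> ?O" using ext_nbr_observed tri_obs by blast
    then show ?thesis using ext_nbr_outer[OF a] by simp
  qed
  ultimately show ?thesis by blast
qed

lemma card_W_eq_3_card_triangles: "card W = 3 * card (tri ` W)"
proof -
  have "\<Union>(tri ` W) = W" using tri_subset_W self_in_tri by blast
  moreover have "3 * card (tri ` W) = card (\<Union>(tri ` W))"
  proof (rule card_partition)
    show "finite (tri ` W)" using finite_W by simp
    show "finite (\<Union>(tri ` W))" using calculation finite_W by simp
    show "card T = 3" if "T \<in> tri ` W" for T using that card_tri by blast
    show "T1 \<inter> T2 = {}" if T: "T1 \<in> tri ` W" "T2 \<in> tri ` W" "T1 \<noteq> T2" for T1 T2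
    proof -
      obtain a b where "a \<in> W" "b \<in> W" "T1 = tri a" "T2 = tri b" using T(1,2) by blast
      then show ?thesis using tri_eq[of a] tri_eq[of b] T(3) by blast
    qed
  qed
  ultimately show ?thesis by simp
qed

theorem exists_small_power_dominating_set:
  "\<exists>S. power_dominating V m S \<and> 6 * card S + 2 \<le> card V"
proof -
  obtain B where B: "B \<subseteq> tri ` W" "2 * card B \<le> card (tri ` W)"
    and half: "\<forall>x\<in>W. 3 \<le> 2 * card (triangles.crossing B \<inter> triangles.block (tri x))"
    using triangles.exists_small_side_of_locally_max_cut by blast
  have "2 \<le> card (triangles.crossing B \<inter> tri x)" if "x \<in> W" for x
  proof -
    have "3 \<le> 2 * card (triangles.crossing B \<inter> tri x)"
      using bspec[OF half that] triangles_block_tri[OF that] by simp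
    then show ?thesis by linarith
  qed
  then have "V \<subseteq> observed V m (rep ` B)" using all_observed_of_two_crossing[OF B(1)] by blast
  moreover have "rep ` B \<subseteq> V"
  proof
    fix s assume "s \<in> rep ` B"
    then obtain x where "x \<in> W" "s = rep (tri x)" using B(1) by blast
    then show "s \<in> V" using rep_in_tri tri_subset_W by blast
  qed
  ultimately have "power_dominating V m (rep ` B)" unfolding power_dominating_def by blast
  moreover have "card (rep ` B) \<le> card B"
    using card_image_le finite_subset[OF B(1)] finite_W by blast
  moreover have "card W + 2 = card V"
  proof -
    have "card {u, v} \<le> card V" using finite_V u_in_V v_in_V by (intro card_mono) auto
    then show ?thesis using finite_V u_in_V v_in_V u_neq_v by (simp add: card_Diff_subset)
  qed
  ultimately show ?thesis using B(2) card_W_eq_3_card_triangles by (intro exI[of _ "rep ` B"]) linarith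
qed

end

theorem corollary2p7:
  fixes V :: "'a set" and m :: "'a \<Rightarrow> 'a \<Rightarrow> nat"
  assumes "multigraph V m"
    and "two_edge_connected V m"
    and "cubic V m"
    and "\<exists>u v. u \<noteq> v \<and> m u v = 2 \<and> (\<forall>x y. 1 < m x y \<longrightarrow> {x, y} = {u, v})"
    and "claw_free V m"
    and "diamond_free V m"
  shows "real (power_domination_number V m) \<le> (real (card V) - 2) / 6"
proof -
  obtain u v where "claw_diamond_free_digon_cubic V m u v"
    using assms unfolding claw_diamond_free_digon_cubic_def by blast
  then have "\<exists>S. power_dominating V m S \<and> 6 * card S + 2 \<le> card V"
    by (rule claw_diamond_free_digon_cubic.exists_small_power_dominating_set)
  then obtain S where "power_dominating V m S" "6 * card S + 2 \<le> card V" by blast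
  moreover have "finite V" using assms(1) unfolding multigraph_def by blast
  ultimately have "6 * power_domination_number V m + 2 \<le> card V"
    using power_domination_number_le by fastforce
  then show ?thesis by simp
qed

end
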